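(* For all $m,n\ge 1$ one has $K_{m,n}(x,y)=K_{m,n}(y,x)$.
   Context: Let $m,n\ge 1$. $K_{m,n}$ is the complete bipartite graph with vertex set $V=A_m\sqcup B_n$, $A_m=\{a_1,\dots,a_m\}$, $B_n=\{b_1,\dots,b_n\}$, with exactly one edge $\{a_i,b_j\}$ for every $i,j$; $a_m$ is the sink. A configuration is a function $u:V\to\mathbb Z$; $\mathrm{degree}(u)=\sum_c u_c$. For $c\in V$ with graph degree $d_c$, $\Delta^{(c)}=d_c e_c-\sum_{c'\text{ adjacent to }c}e_{c'}$ ($e_c$ the indicator of $c$), $\Delta^{(C)}=\sum_{c\in C}\Delta^{(c)}$. Toppling equivalence: difference in the integer span of the $\Delta^{(c)}$; effective: toppling equivalent to a non-negative configuration; $\mathrm{rank}(u)=-1+\min\{\mathrm{degree}(f): f\ge0,\ u-f\text{ not effective}\}$. $u$ is parking if $u_c\ge0$ for $c\ne a_m$ and for every non-empty $C\subseteq V\setminus\{a_m\}$, $u-\Delta^{(C)}$ has a negative value at a vertex other than $a_m$; sorted if $u_{a_1}\le\dots\le u_{a_{m-1}}$ and $u_{b_1}\le\dots\le u_{b_n}$ (no condition at the sink). For a parking sorted $u$ set $\mathrm{xpara}(u)=(m-1)(n-1)+\mathrm{rank}(u)-\mathrm{degree}(u)$ and $\mathrm{ypara}(u)=\mathrm{rank}(u)+1$ (both are non-negative integers). Define the formal power series $K_{m,n}(x,y)=\sum_u x^{\mathrm{xpara}(u)}y^{\mathrm{ypara}(u)}$, the sum over all parking sorted configurations $u$ on $K_{m,n}$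 (all sink values allowed); equivalently $K_{m,n}(x,y)=x^{(m-1)(n-1)}y\,\widetilde K_{m,n}(x^{-1},xy)$ where $\widetilde K_{m,n}(d,r)=\sum_u d^{\mathrm{degree}(u)}r^{\mathrm{rank}(u)}$. *)

theory Defs
  imports Main
begin

datatype vert = A nat | B nat

definition V :: "nat \<Rightarrow> nat \<Rightarrow> vert set" where
  "V m n = A ` {1..m} \<union> B ` {1..n}"

definition sink :: "nat \<Rightarrow> vert" where
  "sink m = A m"

fun adj :: "nat \<Rightarrow> nat \<Rightarrow> vert \<Rightarrow> vert \<Rightarrow> bool" where
  "adj m n (A i) (B j) = (1 \<le> i \<and> i \<le> m \<and> 1 \<le> j \<and> j \<le> n)"
| "adj m n (B j) (A i) = (1 \<le> i \<and> i \<le> m \<and> 1 \<le> j \<and> j \<le> n)"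
| "adj m n _ _ = False"

fun gdeg :: "nat \<Rightarrow> nat \<Rightarrow> vert \<Rightarrow> int" where
  "gdeg m n (A i) = int n"
| "gdeg m n (B j) = int m"

definition config :: "nat \<Rightarrow> nat \<Rightarrow> (vert \<Rightarrow> int) \<Rightarrow> bool" where
  "config m n u \<longleftrightarrow> (\<forall>c. c \<notin> V m n \<longrightarrow> u c = 0)"

definition degree :: "nat \<Rightarrow> nat \<Rightarrow> (vert \<Rightarrow> int) \<Rightarrow> int" where
  "degree m n u = (\<Sum>c\<in>V m n. u c)"

definition Delta :: "nat \<Rightarrow> nat \<Rightarrow> vert \<Rightarrow> (vert \<Rightarrow> int)" where
  "Delta m n c = (\<lambda>x. (if x = c then gdeg m n c else 0) - (if adj m n c x then 1 else 0))"

definition DeltaSet :: "nat \<Rightarrow> nat \<Rightarrow> vert set \<Rightarrow> (vert \<Rightarrow> int)" where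
  "DeltaSet m n C = (\<lambda>x. \<Sum>c\<in>C. Delta m n c x)"

definition toppling_equiv :: "nat \<Rightarrow> nat \<Rightarrow> (vert \<Rightarrow> int) \<Rightarrow> (vert \<Rightarrow> int) \<Rightarrow> bool" where
  "toppling_equiv m n u v \<longleftrightarrow>
     (\<exists>t :: vert \<Rightarrow> int. \<forall>x. u x - v x = (\<Sum>c\<in>V m n. t c * Delta m n c x))"

definition effective :: "nat \<Rightarrow> nat \<Rightarrow> (vert \<Rightarrow> int) \<Rightarrow> bool" where
  "effective m n u \<longleftrightarrow>
     (\<exists>v. config m n v \<and> (\<forall>c. v c \<ge> 0) \<and> toppling_equiv m n u v)"

definition rank :: "nat \<Rightarrow> nat \<Rightarrow> (vert \<Rightarrow> int) \<Rightarrow> int" where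
  "rank m n u = -1 + int (LEAST k. \<exists>f. config m n f \<and> (\<forall>c. f c \<ge> 0) \<and>
                          degree m n f = int k \<and> \<not> effective m n (\<lambda>x. u x - f x))"

definition parking :: "nat \<Rightarrow> nat \<Rightarrow> (vert \<Rightarrow> int) \<Rightarrow> bool" where
  "parking m n u \<longleftrightarrow>
     (\<forall>c\<in>V m n - {sink m}. u c \<ge> 0) \<and>
     (\<forall>C. C \<noteq> {} \<longrightarrow> C \<subseteq> V m n - {sink m} \<longrightarrow>
        (\<exists>c\<in>V m n - {sink m}. u c - DeltaSet m n C c < 0))"

definition sorted_conf :: "nat \<Rightarrow> nat \<Rightarrow> (vert \<Rightarrow> int) \<Rightarrow> bool" where
  "sorted_conf m n u \<longleftrightarrow>
     (\<forall>i j. 1 \<le> i \<longrightarrow> i \<le> j \<longrightarrow> j \<le> m - 1 \<longrightarrow> u (A i) \<le> u (A j)) \<and>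
     (\<forall>i j. 1 \<le> i \<longrightarrow> i \<le> j \<longrightarrow> j \<le> n \<longrightarrow> u (B i) \<le> u (B j))"

definition xpara :: "nat \<Rightarrow> nat \<Rightarrow> (vert \<Rightarrow> int) \<Rightarrow> int" where
  "xpara m n u = (int m - 1) * (int n - 1) + rank m n u - degree m n u"

definition ypara :: "nat \<Rightarrow> nat \<Rightarrow> (vert \<Rightarrow> int) \<Rightarrow> int" where
  "ypara m n u = rank m n u + 1"

text \<open>Parking sorted configurations contributing x^a y^b to K_{m,n}(x,y);
  the coefficient of x^a y^b in K_{m,n}(x,y) is the cardinality of this set.\<close>
definition PS :: "nat \<Rightarrow> nat \<Rightarrow> int \<Rightarrow> int \<Rightarrow> (vert \<Rightarrow> int) set" where
  "PS m n a b = {u. config m n u \<and> parking m n u \<and> sorted_conf m n u \<and>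
                    xpara m n u = a \<and> ypara m n u = b}"

definition Kcoeff :: "nat \<Rightarrow> nat \<Rightarrow> int \<Rightarrow> int \<Rightarrow> nat" where
  "Kcoeff m n a b = card (PS m n a b)"

end

theory Submission
  imports Defs "HOL-Combinatorics.Permutations"
begin

text \<open>
  By the Riemann--Roch theorem of Baker and Norine for the canonical configuration
  K(v) = deg v - 2 and genus g = (m - 1)(n - 1), rank u - rank (K - u) = degree u - g + 1.
  Hence xpara u = ypara (K - u) and ypara u = xpara (K - u).  Every toppling class contains
  exactly one parking configuration, and permuting the non-sink vertices of each side
  preserves rank, degree and the parking property; so sending u to the sorted parking
  representative of K - u is an involution on parking sorted configurations which exchanges
  the exponents of x and y.
\<close>

lemma finite_ex_max:
  fixes f :: "'a \<Rightarrow> 'b::linorder"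
  assumes "finite S" "S \<noteq> {}"
  shows "\<exists>x\<in>S. \<forall>y\<in>S. f y \<le> f x"
proof -
  have "Max (f ` S) \<in> f ` S" using assms by simp
  then obtain x where "x \<in> S" "f x = Max (f ` S)" by auto
  moreover have "\<forall>y\<in>S. f y \<le> Max (f ` S)" using assms(1) by simp
  ultimately show ?thesis by metis
qed

lemma ex_max_bounded_int:
  fixes f :: "'a \<Rightarrow> int"
  assumes "x0 \<in> S" "\<And>x. x \<in> S \<Longrightarrow> f x \<le> b"
  shows "\<exists>x\<in>S. \<forall>y\<in>S. f y \<le> f x"
proof -
  define k where "k = (LEAST k. \<exists>x\<in>S. nat (b - f x) = k)"
  have "\<exists>x\<in>S. nat (b - f x) = k" unfolding k_def
    by (rule LeastI[of _ "nat (b - f x0)"]) (use assms(1) in blast)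
  then obtain x where x: "x \<in> S" "nat (b - f x) = k" by blast
  have "f y \<le> f x" if "y \<in> S" for y
  proof -
    have "k \<le> nat (b - f y)" unfolding k_def by (rule Least_le) (use that in blast)
    then show ?thesis using x(2) assms(2)[OF that] assms(2)[OF x(1)] by simp
  qed
  then show ?thesis using x(1) by blast
qed

lemma Least_shift:
  fixes f g :: "'i \<Rightarrow> nat"
  assumes "i0 \<in> I" "\<And>i. i \<in> I \<Longrightarrow> int (f i) = int (g i) + c"
  shows "int (LEAST k. \<exists>i\<in>I. f i = k) = int (LEAST k. \<exists>i\<in>I. g i = k) + c"
proof -
  define F where "F = (LEAST k. \<exists>i\<in>I. f i = k)"
  define G where "G = (LEAST k. \<exists>i\<in>I. g i = k)"
  have "\<exists>i\<in>I. f i = F" "\<exists>j\<in>I. g j = G"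
    unfolding F_def G_def by (rule LeastI_ex, use assms(1) in blast)+
  then obtain i j where i: "i \<in> I" "f i = F" and j: "j \<in> I" "g j = G" by blast
  have "G \<le> g i" "F \<le> f j" unfolding F_def G_def using i(1) j(1) by (auto intro: Least_le)
  then show ?thesis using assms(2)[OF i(1)] assms(2)[OF j(1)] i(2) j(2)
    unfolding F_def[symmetric] G_def[symmetric] by linarith
qed

lemma inj_on_extend_below:
  fixes p :: "'a \<Rightarrow> 'b::order"
  assumes "inj_on p (S - {x})" "\<And>z. z \<in> S - {x} \<Longrightarrow> c < p z"
  shows "inj_on (\<lambda>z. if z = x then c else p z) S"
proof (rule inj_onI)
  fix a b assume "a \<in> S" "b \<in> S" "(if a = x then c else p a) = (if b = x then c else p b)"
  then show "a = b"
    using assms(2)[of a] assms(2)[of b] inj_onD[OF assms(1), of a b] by (auto split: if_splits)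
qed


definition nbrs :: "nat \<Rightarrow> nat \<Rightarrow> vert \<Rightarrow> vert set" where
  "nbrs m n x = {y \<in> V m n. adj m n x y}"

lemma adj_sym: "adj m n x y = adj m n y x"
  by (cases x; cases y) auto

lemma adj_irrefl: "\<not> adj m n x x"
  by (cases x) auto

lemma adj_in_V: "adj m n x y \<Longrightarrow> x \<in> V m n \<and> y \<in> V m n"
  by (cases x; cases y) (auto simp: V_def)

lemma finite_V [simp]: "finite (V m n)"
  by (simp add: V_def)

lemma V_cases:
  assumes "c \<in> V m n"
  obtains i where "c = A i" "1 \<le> i" "i \<le> m" | j where "c = B j" "1 \<le> j" "j \<le> n"
  using assms unfolding V_def by auto

lemma sink_in_V: "1 \<le> m \<Longrightarrow> sink m \<in> V m n"
  by (auto simp: sink_def V_def)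

lemma finite_nbrs [simp]: "finite (nbrs m n x)"
  by (simp add: nbrs_def)

lemma nbrs_subset_V: "nbrs m n x \<subseteq> V m n"
  by (auto simp: nbrs_def)

lemma nbrs_A: "1 \<le> i \<Longrightarrow> i \<le> m \<Longrightarrow> nbrs m n (A i) = B ` {1..n}"
  by (auto simp: nbrs_def V_def elim: adj.elims)

lemma nbrs_B: "1 \<le> j \<Longrightarrow> j \<le> n \<Longrightarrow> nbrs m n (B j) = A ` {1..m}"
  by (auto simp: nbrs_def V_def elim: adj.elims)

lemma card_nbrs: "x \<in> V m n \<Longrightarrow> int (card (nbrs m n x)) = gdeg m n x"
  by (auto simp: V_def nbrs_A nbrs_B card_image inj_on_def)

lemma sum_V: "sum f (V m n) = (\<Sum>i=1..m. f (A i)) + (\<Sum>j=1..n. f (B j))"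
proof -
  have "sum f (V m n) = sum f (A ` {1..m}) + sum f (B ` {1..n})"
    unfolding V_def by (rule sum.union_disjoint) auto
  then show ?thesis
    by (simp add: sum.reindex inj_on_def)
qed

lemma degree_split: "1 \<le> m \<Longrightarrow> degree m n w = w (sink m) + (\<Sum>c\<in>V m n - {sink m}. w c)"
  unfolding degree_def by (simp add: sink_in_V sum.remove)

section \<open>The Laplacian and toppling equivalence\<close>

definition laplacian :: "nat \<Rightarrow> nat \<Rightarrow> (vert \<Rightarrow> int) \<Rightarrow> vert \<Rightarrow> int" where
  "laplacian m n t x = (\<Sum>c\<in>V m n. t c * Delta m n c x)"

lemma laplacian_eq:
  assumes "x \<in> V m n"
  shows "laplacian m n t x = (\<Sum>y\<in>nbrs m n x. t x - t y)"
proof -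
  have "laplacian m n t x =
      (\<Sum>c\<in>V m n. (if c = x then t x * gdeg m n x else 0) - (if c \<in> nbrs m n x then t c else 0))"
    unfolding laplacian_def Delta_def
    by (rule sum.cong) (auto simp: nbrs_def adj_sym adj_irrefl)
  also have "\<dots> = t x * gdeg m n x - sum t (nbrs m n x)"
    using assms nbrs_subset_V[of m n x] by (simp add: sum_subtractf sum.If_cases Int_absorb1)
  also have "\<dots> = (\<Sum>y\<in>nbrs m n x. t x - t y)"
    using card_nbrs[OF assms] by (simp add: sum_subtractf mult.commute)
  finally show ?thesis .
qed

lemma laplacian_outside: "x \<notin> V m n \<Longrightarrow> laplacian m n t x = 0"
  unfolding laplacian_def Delta_def using adj_in_V by (auto intro!: sum.neutral)

lemma sum_Delta:
  assumes "c \<in> V m n"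
  shows "(\<Sum>x\<in>V m n. Delta m n c x) = 0"
proof -
  have "(\<Sum>x\<in>V m n. Delta m n c x) =
      (\<Sum>x\<in>V m n. (if x = c then gdeg m n c else 0) - (if x \<in> nbrs m n c then 1 else 0))"
    unfolding Delta_def by (rule sum.cong) (auto simp: nbrs_def)
  also have "\<dots> = gdeg m n c - int (card (nbrs m n c))"
    using assms nbrs_subset_V[of m n c] by (simp add: sum_subtractf sum.If_cases Int_absorb1)
  finally show ?thesis using card_nbrs[OF assms] by simp
qed

lemma sum_laplacian: "(\<Sum>x\<in>V m n. laplacian m n t x) = 0"
  unfolding laplacian_def
  by (subst sum.swap) (simp add: sum_distrib_left[symmetric] sum_Delta)

lemma laplacian_add: "laplacian m n (\<lambda>c. s c + t c) x = laplacian m n s x + laplacian m n t x"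
  unfolding laplacian_def by (simp add: algebra_simps sum.distrib)

lemma laplacian_minus: "laplacian m n (\<lambda>c. - t c) x = - laplacian m n t x"
  unfolding laplacian_def by (simp add: sum_negf)

lemma toppling_equiv_iff: "toppling_equiv m n u v \<longleftrightarrow> (\<exists>t. \<forall>x. u x - v x = laplacian m n t x)"
  by (simp add: toppling_equiv_def laplacian_def)

lemma toppling_equiv_refl: "toppling_equiv m n u u"
  unfolding toppling_equiv_iff by (rule exI[of _ "\<lambda>_. 0"]) (simp add: laplacian_def)

lemma toppling_equiv_sym: "toppling_equiv m n u v \<Longrightarrow> toppling_equiv m n v u"
  unfolding toppling_equiv_iff by (metis laplacian_minus minus_diff_eq)

lemma toppling_equiv_trans:
  assumes "toppling_equiv m n u v" "toppling_equiv m n v w"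
  shows "toppling_equiv m n u w"
proof -
  obtain s t where "\<And>x. u x - v x = laplacian m n s x" "\<And>x. v x - w x = laplacian m n t x"
    using assms unfolding toppling_equiv_iff by blast
  then have "u x - w x = laplacian m n (\<lambda>c. s c + t c) x" for x
    unfolding laplacian_add by (metis add_diff_cancel_left' diff_add_cancel diff_diff_eq2)
  then show ?thesis unfolding toppling_equiv_iff by blast
qed

lemma toppling_equiv_diff:
  "toppling_equiv m n u u' \<Longrightarrow> toppling_equiv m n (\<lambda>x. u x - f x) (\<lambda>x. u' x - f x)"
  unfolding toppling_equiv_def by simp

lemma toppling_equiv_reflect:
  "toppling_equiv m n u v \<Longrightarrow> toppling_equiv m n (\<lambda>x. k x - u x) (\<lambda>x. k x - v x)"
  using toppling_equiv_sym unfolding toppling_equiv_def by (simp add: algebra_simps)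

lemma degree_toppling_equiv:
  assumes "toppling_equiv m n u v"
  shows "degree m n u = degree m n v"
proof -
  obtain t where t: "\<And>x. u x - v x = laplacian m n t x"
    using assms unfolding toppling_equiv_iff by blast
  have "degree m n u - degree m n v = (\<Sum>x\<in>V m n. laplacian m n t x)"
    unfolding degree_def sum_subtractf[symmetric] t ..
  then show ?thesis by (simp add: sum_laplacian)
qed

lemma effective_toppling_equiv: "effective m n u \<Longrightarrow> toppling_equiv m n u u' \<Longrightarrow> effective m n u'"
  unfolding effective_def by (meson toppling_equiv_sym toppling_equiv_trans)

lemma effective_add_nonneg:
  assumes "effective m n u" "config m n g" "\<forall>c. 0 \<le> g c"
  shows "effective m n (\<lambda>x. u x + g x)"
proof -
  obtain v where v: "config m n v" "\<forall>c. 0 \<le> v c" "toppling_equiv m n u v"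
    using assms(1) unfolding effective_def by blast
  have "toppling_equiv m n (\<lambda>x. u x + g x) (\<lambda>x. v x + g x)"
    using v(3) unfolding toppling_equiv_def by simp
  then show ?thesis
    using v assms(2,3) unfolding effective_def config_def by (auto intro!: exI[of _ "\<lambda>x. v x + g x"])
qed

definition breaking :: "nat \<Rightarrow> nat \<Rightarrow> (vert \<Rightarrow> int) \<Rightarrow> (vert \<Rightarrow> int) \<Rightarrow> bool" where
  "breaking m n u f \<longleftrightarrow> config m n f \<and> (\<forall>c. 0 \<le> f c) \<and> \<not> effective m n (\<lambda>x. u x - f x)"

lemma rank_eq_Least_breaking:
  "rank m n u = -1 + int (LEAST k. \<exists>f. breaking m n u f \<and> degree m n f = int k)"
  unfolding rank_def breaking_def by (simp add: conj_ac)

lemma rank_cong: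
  assumes "\<And>f. breaking m n u f \<Longrightarrow> \<exists>f'. breaking m n u' f' \<and> degree m n f' = degree m n f"
    and "\<And>f. breaking m n u' f \<Longrightarrow> \<exists>f'. breaking m n u f' \<and> degree m n f' = degree m n f"
  shows "rank m n u = rank m n u'"
proof -
  have "(\<exists>f. breaking m n u f \<and> degree m n f = int k) \<longleftrightarrow>
        (\<exists>f. breaking m n u' f \<and> degree m n f = int k)" for k
    using assms by metis
  then show ?thesis unfolding rank_eq_Least_breaking by simp
qed

lemma rank_toppling_equiv:
  assumes "toppling_equiv m n u u'"
  shows "rank m n u = rank m n u'"
proof -
  have "toppling_equiv m n (\<lambda>x. u x - f x) (\<lambda>x. u' x - f x)" for f
    by (rule toppling_equiv_diff[OF assms])
  then have "breaking m n u f \<longleftrightarrow> breaking m n u' f" for f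
    unfolding breaking_def using effective_toppling_equiv toppling_equiv_sym by blast
  then show ?thesis by (intro rank_cong) auto
qed


section \<open>Set firings and parking configurations\<close>

lemma DeltaSet_eq_laplacian:
  assumes "C \<subseteq> V m n"
  shows "DeltaSet m n C x = laplacian m n (\<lambda>c. if c \<in> C then 1 else 0) x"
proof -
  have "laplacian m n (\<lambda>c. if c \<in> C then 1 else 0) x =
      (\<Sum>c\<in>V m n. if c \<in> C then Delta m n c x else 0)"
    unfolding laplacian_def by (rule sum.cong) auto
  also have "\<dots> = (\<Sum>c\<in>V m n \<inter> C. Delta m n c x)" by (simp add: sum.inter_restrict)
  also have "V m n \<inter> C = C" using assms by blast
  finally show ?thesis unfolding DeltaSet_def by simp
qed

lemma DeltaSet_inside:
  assumes "C \<subseteq> V m n" "x \<in> C"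
  shows "DeltaSet m n C x = int (card {y \<in> nbrs m n x. y \<notin> C})"
proof -
  have xV: "x \<in> V m n" using assms by blast
  have "DeltaSet m n C x =
      (\<Sum>c\<in>C. (if x = c then gdeg m n x else 0) - (if c \<in> nbrs m n x then 1 else 0))"
    unfolding DeltaSet_def Delta_def
    by (rule sum.cong) (use assms(1) in \<open>auto simp: nbrs_def adj_sym\<close>)
  also have "\<dots> = gdeg m n x - int (card (nbrs m n x \<inter> C))"
    using finite_subset[OF assms(1)] assms(2)
    by (simp add: sum_subtractf sum.If_cases Int_commute)
  also have "\<dots> = int (card (nbrs m n x - C))"
    using card_nbrs[OF xV] card_Int_Diff[of "nbrs m n x" C] by simp
  finally show ?thesis by (simp add: set_diff_eq)
qed

lemma DeltaSet_outside:
  assumes "C \<subseteq> V m n" "x \<notin> C"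
  shows "DeltaSet m n C x = - int (card {c \<in> C. adj m n c x})"
proof -
  have "DeltaSet m n C x = - (\<Sum>c\<in>C. if adj m n c x then 1 else 0)"
    unfolding DeltaSet_def Delta_def sum_negf[symmetric]
    by (rule sum.cong) (use assms(2) in auto)
  also have "\<dots> = - int (card {c \<in> C. adj m n c x})"
    using finite_subset[OF assms(1)] by (simp add: sum.If_cases Int_def conj_commute)
  finally show ?thesis .
qed

lemma DeltaSet_outside_nonpos: "C \<subseteq> V m n \<Longrightarrow> x \<notin> C \<Longrightarrow> DeltaSet m n C x \<le> 0"
  by (simp add: DeltaSet_outside)

text \<open>Dhar's criterion: when C fires, a vertex of C loses one chip per edge leaving C and a
  vertex outside C only gains, so parking means that no nonempty set of non-sink vertices can
  fire without some vertex of it going negative.\<close>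

lemma parking_iff:
  "parking m n u \<longleftrightarrow> (\<forall>c\<in>V m n - {sink m}. 0 \<le> u c) \<and>
     (\<forall>C. C \<noteq> {} \<longrightarrow> C \<subseteq> V m n - {sink m} \<longrightarrow> (\<exists>x\<in>C. u x < int (card {y \<in> nbrs m n x. y \<notin> C})))"
proof -
  have firing: "(\<exists>x\<in>V m n - {sink m}. u x < DeltaSet m n C x) \<longleftrightarrow>
      (\<exists>x\<in>C. u x < int (card {y \<in> nbrs m n x. y \<notin> C}))"
    if u: "\<forall>c\<in>V m n - {sink m}. 0 \<le> u c" and C: "C \<subseteq> V m n - {sink m}" for C
  proof -
    have CV: "C \<subseteq> V m n" using C by blast
    have outside: "DeltaSet m n C x \<le> u x" if "x \<in> V m n - {sink m}" "x \<notin> C" for x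
      using u that DeltaSet_outside_nonpos[OF CV, of x] by force
    have inside: "u x < DeltaSet m n C x \<longleftrightarrow> u x < int (card {y \<in> nbrs m n x. y \<notin> C})"
      if "x \<in> C" for x
      using DeltaSet_inside[OF CV that] by simp
    show ?thesis
    proof
      assume "\<exists>x\<in>V m n - {sink m}. u x < DeltaSet m n C x"
      then obtain x where "x \<in> V m n - {sink m}" "u x < DeltaSet m n C x" ..
      then show "\<exists>x\<in>C. u x < int (card {y \<in> nbrs m n x. y \<notin> C})"
        using inside outside by (metis not_le)
    next
      assume "\<exists>x\<in>C. u x < int (card {y \<in> nbrs m n x. y \<notin> C})"
      then show "\<exists>x\<in>V m n - {sink m}. u x < DeltaSet m n C x"
        using inside C by blast
    qed
  qed
  show ?thesis
    unfolding parking_def by (rule conj_cong[OF refl]) (simp add: firing)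
qed

lemma parking_nonneg: "parking m n u \<Longrightarrow> c \<in> V m n - {sink m} \<Longrightarrow> 0 \<le> u c"
  unfolding parking_def by blast

lemma parking_burning_vertex:
  assumes "parking m n u" "C \<noteq> {}" "C \<subseteq> V m n - {sink m}"
  obtains x where "x \<in> C" "u x < int (card {y \<in> nbrs m n x. y \<notin> C})"
proof -
  have "\<exists>x\<in>C. u x < int (card {y \<in> nbrs m n x. y \<notin> C})"
    using assms(1) unfolding parking_iff using assms(2,3) by simp
  then show ?thesis using that by blast
qed

lemma parking_less_gdeg:
  assumes "parking m n u" "c \<in> V m n - {sink m}"
  shows "u c < gdeg m n c"
proof -
  have "u c < int (card {y \<in> nbrs m n c. y \<notin> {c}})"
    using parking_burning_vertex[OF assms(1), of "{c}"] assms(2) by blast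
  also have "{y \<in> nbrs m n c. y \<notin> {c}} = nbrs m n c"
    by (auto simp: nbrs_def adj_irrefl)
  finally show ?thesis using assms(2) card_nbrs by simp
qed

lemma laplacian_at_max:
  assumes "x \<in> V m n" "\<And>y. y \<in> V m n \<Longrightarrow> t y \<le> t x"
  shows "int (card {y \<in> nbrs m n x. t y < t x}) \<le> laplacian m n t x"
proof -
  have "int (card {y \<in> nbrs m n x. t y < t x}) = (\<Sum>y\<in>nbrs m n x. if t y < t x then 1 else 0)"
    by (simp add: sum.If_cases Int_def)
  also have "\<dots> \<le> (\<Sum>y\<in>nbrs m n x. t x - t y)"
    by (rule sum_mono) (use assms(2) nbrs_subset_V in fastforce)
  finally show ?thesis using laplacian_eq[OF assms(1)] by simp
qed

lemma parking_potential_max: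
  assumes m: "1 \<le> m" and pu: "parking m n u" and pv: "parking m n v"
    and t: "\<And>x. u x - v x = laplacian m n t x" and c: "c \<in> V m n"
  shows "t c \<le> t (sink m)"
proof (rule ccontr)
  assume above: "\<not> t c \<le> t (sink m)"
  have "V m n \<noteq> {}" using c by blast
  then obtain x0 where x0: "x0 \<in> V m n" "\<And>y. y \<in> V m n \<Longrightarrow> t y \<le> t x0"
    using finite_ex_max[OF finite_V, of _ _ t] by blast
  define C where "C = {y \<in> V m n. t y = t x0}"
  have "sink m \<notin> C" using x0(2)[OF c] above unfolding C_def by auto
  then have CV: "C \<subseteq> V m n - {sink m}" unfolding C_def by auto
  have "C \<noteq> {}" using x0(1) unfolding C_def by blast
  then obtain x where x: "x \<in> C" "u x < int (card {y \<in> nbrs m n x. y \<notin> C})"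
    by (rule parking_burning_vertex[OF pu _ CV])
  have xV: "x \<in> V m n" and tx: "t x = t x0" using x(1) unfolding C_def by auto
  have "y \<notin> C \<longleftrightarrow> t y < t x" if "y \<in> nbrs m n x" for y
    using that nbrs_subset_V x0(2)[of y] tx unfolding C_def by force
  then have "{y \<in> nbrs m n x. y \<notin> C} = {y \<in> nbrs m n x. t y < t x}" by blast
  also have "int (card \<dots>) \<le> laplacian m n t x"
    using x0(2) tx by (intro laplacian_at_max[OF xV]) simp
  finally have "v x < 0" using x(2) t[of x] by simp
  moreover have "0 \<le> v x" using parking_nonneg[OF pv] x(1) CV by blast
  ultimately show False by simp
qed

lemma parking_unique:
  assumes m: "1 \<le> m" and "parking m n u" "parking m n v" "config m n u" "config m n v"
    and "toppling_equiv m n u v"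
  shows "u = v"
proof
  fix x
  obtain t where t: "\<And>x. u x - v x = laplacian m n t x"
    using assms(6) unfolding toppling_equiv_iff by blast
  have t': "\<And>x. v x - u x = laplacian m n (\<lambda>c. - t c) x"
    using t by (metis laplacian_minus minus_diff_eq)
  have const: "t c = t (sink m)" if "c \<in> V m n" for c
    using parking_potential_max[OF m assms(2,3) t that] parking_potential_max[OF m assms(3,2) t' that]
    by simp
  show "u x = v x"
  proof (cases "x \<in> V m n")
    case True
    have "laplacian m n t x = 0"
      unfolding laplacian_eq[OF True]
      by (intro sum.neutral ballI) (metis True const nbrs_subset_V subsetD diff_self)
    then show ?thesis using t[of x] by simp
  next
    case False
    then show ?thesis using assms(4,5) unfolding config_def by simp
  qed
qed

lemma exists_nonneg_off_sink:
  assumes m: "1 \<le> m" and n: "1 \<le> n" and cu: "config m n u"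
  shows "\<exists>w. config m n w \<and> toppling_equiv m n u w \<and> (\<forall>c\<in>V m n - {sink m}. 0 \<le> w c)"
proof -
  define k where "k = (\<Sum>c\<in>V m n. \<bar>u c\<bar>)"
  have k0: "0 \<le> k" unfolding k_def by (simp add: sum_nonneg)
  have uk: "\<bar>u c\<bar> \<le> k" if "c \<in> V m n" for c
    unfolding k_def by (rule member_le_sum) (use that in auto)
  \<comment> \<open>firing every B-vertex k times and the sink (m + 1) k times gives every non-sink vertex k chips\<close>
  define t where "t = (\<lambda>c. case c of A i \<Rightarrow> (if i = m then int (m + 1) * k else 0) | B j \<Rightarrow> k)"
  define w where "w = (\<lambda>x. u x - laplacian m n t x)"
  have "laplacian m n t c \<le> - k" if c: "c \<in> V m n - {sink m}" for c
  proof -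
    have cV: "c \<in> V m n" using c by blast
    show ?thesis
    proof (cases rule: V_cases[OF cV])
      case (1 i)
      then have "i \<noteq> m" using c by (auto simp: sink_def)
      have "laplacian m n t c = (\<Sum>y\<in>nbrs m n c. - k)"
        unfolding laplacian_eq[OF cV]
        by (rule sum.cong) (use 1 \<open>i \<noteq> m\<close> in \<open>auto simp: nbrs_A t_def\<close>)
      also have "\<dots> = - (int n * k)" using card_nbrs[OF cV] 1 by simp
      finally show ?thesis using n k0 by (simp add: mult_le_cancel_right1)
    next
      case (2 j)
      have "laplacian m n t c = (\<Sum>i=1..m. k - t (A i))"
        unfolding laplacian_eq[OF cV] using 2 by (simp add: nbrs_B t_def sum.reindex inj_on_def)
      also have "\<dots> = int m * k - int (m + 1) * k"
        using m by (simp add: sum_subtractf t_def)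
      finally show ?thesis by (simp add: algebra_simps)
    qed
  qed
  then have "\<forall>c\<in>V m n - {sink m}. 0 \<le> w c"
    unfolding w_def using uk by (smt (verit) DiffD1)
  moreover have "config m n w" using cu laplacian_outside unfolding w_def config_def by simp
  moreover have "toppling_equiv m n u w" unfolding toppling_equiv_iff w_def by auto
  ultimately show ?thesis by blast
qed

lemma fire_set_toppling_equiv:
  assumes "C \<subseteq> V m n" "config m n w"
  shows "config m n (\<lambda>x. w x - DeltaSet m n C x) \<and> toppling_equiv m n w (\<lambda>x. w x - DeltaSet m n C x)"
  using assms DeltaSet_eq_laplacian[OF assms(1)] laplacian_outside
  unfolding config_def toppling_equiv_iff by auto

lemma DeltaSet_sink_or_B:
  assumes m: "1 \<le> m" and C: "C \<noteq> {}" "C \<subseteq> V m n - {sink m}"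
  shows "DeltaSet m n C (sink m) < 0 \<or>
    (DeltaSet m n C (sink m) = 0 \<and> (\<forall>j\<in>{1..n}. DeltaSet m n C (B j) < 0))"
proof -
  have CV: "C \<subseteq> V m n" and sC: "sink m \<notin> C" using C by auto
  have fC: "finite C" using finite_subset[OF CV] by simp
  show ?thesis
  proof (cases "\<exists>j. B j \<in> C")
    case True
    then obtain j where "B j \<in> C" by blast
    moreover have "adj m n (B j) (sink m)" using calculation CV m by (auto simp: V_def sink_def)
    ultimately have "{c \<in> C. adj m n c (sink m)} \<noteq> {}" by blast
    then show ?thesis using DeltaSet_outside[OF CV sC] fC by (simp add: card_gt_0_iff)
  next
    case False
    have "\<not> adj m n c (sink m)" if "c \<in> C" for c
      using False that by (cases c) (auto simp: sink_def)
    then have "{c \<in> C. adj m n c (sink m)} = {}" by blast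
    with DeltaSet_outside[OF CV sC] have "DeltaSet m n C (sink m) = 0" by (simp only: card.empty)
    moreover have "DeltaSet m n C (B j) < 0" if j: "j \<in> {1..n}" for j
    proof -
      obtain c0 where c0: "c0 \<in> C" using C by blast
      then obtain i where "c0 = A i" "1 \<le> i" "i \<le> m"
        using False CV by (metis V_cases subsetD)
      then have "c0 \<in> {c \<in> C. adj m n c (B j)}" using c0 j by simp
      then have "{c \<in> C. adj m n c (B j)} \<noteq> {}" by blast
      moreover have "B j \<notin> C" using False by blast
      ultimately show ?thesis using DeltaSet_outside[OF CV] fC by (simp add: card_gt_0_iff)
    qed
    ultimately show ?thesis by blast
  qed
qed

text \<open>A legal firing of a nonempty set of non-sink vertices either feeds the sink or, if the
  set contains only A-vertices, feeds every B-vertex.\<close>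

lemma parking_of_lex_max:
  assumes m: "1 \<le> m" and n: "1 \<le> n" and cw: "config m n w" and nonneg: "\<forall>c\<in>V m n - {sink m}. 0 \<le> w c"
    and max: "\<And>w'. config m n w' \<Longrightarrow> toppling_equiv m n w w' \<Longrightarrow> \<forall>c\<in>V m n - {sink m}. 0 \<le> w' c \<Longrightarrow>
      w' (sink m) \<le> w (sink m) \<and>
      (w' (sink m) = w (sink m) \<longrightarrow> sum w' (B ` {1..n}) \<le> sum w (B ` {1..n}))"
  shows "parking m n w"
proof -
  have "\<exists>c\<in>V m n - {sink m}. w c - DeltaSet m n C c < 0"
    if C: "C \<noteq> {}" "C \<subseteq> V m n - {sink m}" for C
  proof (rule ccontr)
    assume "\<not> ?thesis"
    then have legal: "\<forall>c\<in>V m n - {sink m}. 0 \<le> w c - DeltaSet m n C c" by (meson not_le)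
    have "config m n (\<lambda>x. w x - DeltaSet m n C x)" "toppling_equiv m n w (\<lambda>x. w x - DeltaSet m n C x)"
      using fire_set_toppling_equiv[OF _ cw, of C] C by auto
    note max' = max[OF this legal]
    from DeltaSet_sink_or_B[OF m C] show False
    proof
      assume "DeltaSet m n C (sink m) < 0"
      then show False using max' by simp
    next
      assume B: "DeltaSet m n C (sink m) = 0 \<and> (\<forall>j\<in>{1..n}. DeltaSet m n C (B j) < 0)"
      have "sum w (B ` {1..n}) < (\<Sum>x\<in>B ` {1..n}. w x - DeltaSet m n C x)"
        using B n by (intro sum_strict_mono) auto
      then show False using max' B by simp
    qed
  qed
  then show ?thesis using nonneg unfolding parking_def by blast
qed

lemma parking_exists:
  assumes m: "1 \<le> m" and n: "1 \<le> n" and cu: "config m n u"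
  shows "\<exists>w. config m n w \<and> parking m n w \<and> toppling_equiv m n u w"
proof -
  define S where "S = {w. config m n w \<and> toppling_equiv m n u w \<and> (\<forall>c\<in>V m n - {sink m}. 0 \<le> w c)}"
  define sumB where "sumB = (\<lambda>w::vert \<Rightarrow> int. sum w (B ` {1..n}))"
  obtain w0 where w0: "w0 \<in> S" using exists_nonneg_off_sink[OF m n cu] unfolding S_def by blast
  have degS: "w (sink m) + (\<Sum>c\<in>V m n - {sink m}. w c) = degree m n u" if "w \<in> S" for w
    using that degree_toppling_equiv[of m n u w] degree_split[OF m, of n w] unfolding S_def by simp
  have nonneg: "0 \<le> (\<Sum>c\<in>V m n - {sink m}. w c)" if "w \<in> S" for w
    using that unfolding S_def by (intro sum_nonneg) blast
  obtain w1 where w1: "w1 \<in> S" "\<And>y. y \<in> S \<Longrightarrow> y (sink m) \<le> w1 (sink m)"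
    using ex_max_bounded_int[OF w0, of "\<lambda>w. w (sink m)" "degree m n u"] degS nonneg by fastforce
  define S2 where "S2 = {w \<in> S. w (sink m) = w1 (sink m)}"
  have sumB_le: "sumB w \<le> (\<Sum>c\<in>V m n - {sink m}. w c)" if "w \<in> S" for w
    unfolding sumB_def by (rule sum_mono2) (use that in \<open>auto simp: S_def V_def sink_def\<close>)
  have "w1 \<in> S2" using w1 unfolding S2_def by simp
  then obtain w2 where w2: "w2 \<in> S2" "\<And>y. y \<in> S2 \<Longrightarrow> sumB y \<le> sumB w2"
    using ex_max_bounded_int[of w1 S2 sumB "degree m n u - w1 (sink m)"] sumB_le degS
    unfolding S2_def by fastforce
  have w2S: "w2 \<in> S" using w2(1) unfolding S2_def by auto
  have "y \<in> S" if "config m n y" "toppling_equiv m n w2 y" "\<forall>c\<in>V m n - {sink m}. 0 \<le> y c" for y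
    using that w2S toppling_equiv_trans unfolding S_def by blast
  then have "parking m n w2"
    using parking_of_lex_max[OF m n] w1(2) w2 w2S unfolding S_def S2_def sumB_def by fastforce
  then show ?thesis using w2S unfolding S_def by blast
qed


section \<open>Divisors of acyclic orientations\<close>

text \<open>An injective p orients every edge towards its endpoint with the larger label;
  orient_div p is the in-degree minus one of the resulting acyclic orientation.\<close>

definition orient_div :: "nat \<Rightarrow> nat \<Rightarrow> (vert \<Rightarrow> int) \<Rightarrow> vert \<Rightarrow> int" where
  "orient_div m n p x = (if x \<in> V m n then int (card {y \<in> nbrs m n x. p y < p x}) - 1 else 0)"

definition canon :: "nat \<Rightarrow> nat \<Rightarrow> vert \<Rightarrow> int" where
  "canon m n x = (if x \<in> V m n then gdeg m n x - 2 else 0)"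

lemma config_canon: "config m n (canon m n)"
  unfolding config_def canon_def by simp

lemma config_diff: "config m n u \<Longrightarrow> config m n v \<Longrightarrow> config m n (\<lambda>x. u x - v x)"
  unfolding config_def by simp

text \<open>At a vertex where the firing script is maximal and, among those, p is minimal, every
  neighbour below it in p is strictly below it in the script.\<close>

lemma orient_div_not_effective:
  assumes m: "1 \<le> m" and inj: "inj_on p (V m n)"
  shows "\<not> effective m n (orient_div m n p)"
proof
  assume "effective m n (orient_div m n p)"
  then obtain v t where v: "\<forall>c. 0 \<le> v c" "\<And>x. orient_div m n p x - v x = laplacian m n t x"
    unfolding effective_def toppling_equiv_iff by blast
  have "V m n \<noteq> {}" using sink_in_V[OF m] by blast
  then obtain x0 where x0: "x0 \<in> V m n" "\<forall>y\<in>V m n. t y \<le> t x0"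
    using finite_ex_max[OF finite_V, of _ _ t] by blast
  define C where "C = {y \<in> V m n. t y = t x0}"
  have "C \<noteq> {}" "finite C" using x0(1) unfolding C_def by auto
  then obtain x where x: "x \<in> C" "\<forall>y\<in>C. p x \<le> p y"
    using finite_ex_max[of C "\<lambda>y. - p y"] by auto
  have xV: "x \<in> V m n" and tx: "\<forall>y\<in>V m n. t y \<le> t x" using x(1) x0 unfolding C_def by auto
  have "t y < t x" if "y \<in> nbrs m n x" "p y < p x" for y
    using that x tx nbrs_subset_V[of m n x] unfolding C_def by (auto simp: order_less_le)
  then have "card {y \<in> nbrs m n x. p y < p x} \<le> card {y \<in> nbrs m n x. t y < t x}"
    by (intro card_mono) auto
  moreover have "int (card {y \<in> nbrs m n x. t y < t x}) \<le> laplacian m n t x"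
    by (rule laplacian_at_max[OF xV]) (use tx in blast)
  ultimately have "int (card {y \<in> nbrs m n x. p y < p x}) \<le> laplacian m n t x" by linarith
  then have "v x < 0" using v(2)[of x] xV unfolding orient_div_def by simp
  then show False using v(1) by (meson not_less)
qed

lemma orient_div_reverse:
  assumes inj: "inj_on p (V m n)" and x: "x \<in> V m n"
  shows "orient_div m n p x + orient_div m n (\<lambda>z. - p z) x = canon m n x"
proof -
  define L where "L = {y \<in> nbrs m n x. p y < p x}"
  define G where "G = {y \<in> nbrs m n x. - p y < - p x}"
  have "p y \<noteq> p x" if "y \<in> nbrs m n x" for y
  proof -
    have "y \<in> V m n" "y \<noteq> x" using that adj_irrefl unfolding nbrs_def by auto
    then show ?thesis using inj x by (meson inj_onD)
  qed
  then have "L \<union> G = nbrs m n x" unfolding L_def G_def by (auto simp: linorder_neq_iff)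
  moreover have "L \<inter> G = {}" unfolding L_def G_def by auto
  moreover have "finite L" "finite G" unfolding L_def G_def by auto
  ultimately have "card L + card G = card (nbrs m n x)" using card_Un_disjoint[of L G] by simp
  then show ?thesis using x card_nbrs[OF x] unfolding orient_div_def canon_def L_def G_def by simp
qed

lemma sum_card_descents_reverse:
  fixes p :: "vert \<Rightarrow> int"
  shows "(\<Sum>x\<in>V m n. card {y \<in> nbrs m n x. p y < p x}) =
   (\<Sum>x\<in>V m n. card {y \<in> nbrs m n x. - p y < - p x})"
proof -
  define S where "S = (SIGMA x:V m n. {y \<in> nbrs m n x. p y < p x})"
  define T where "T = (SIGMA x:V m n. {y \<in> nbrs m n x. - p y < - p x})"
  have "prod.swap ` S = T"
  proof
    show "prod.swap ` S \<subseteq> T"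
      unfolding S_def T_def by (auto simp: nbrs_def adj_sym)
    show "T \<subseteq> prod.swap ` S"
    proof
      fix z assume "z \<in> T"
      then have "prod.swap z \<in> S" unfolding S_def T_def by (auto simp: nbrs_def adj_sym)
      then show "z \<in> prod.swap ` S" by (rule rev_image_eqI) simp
    qed
  qed
  then have "card S = card T" using card_image[OF inj_swap, of S] by simp
  then show ?thesis unfolding S_def T_def by (simp add: card_SigmaI)
qed

lemma degree_canon: "degree m n (canon m n) = 2 * ((int m - 1) * (int n - 1) - 1)"
proof -
  have "(\<Sum>i=1..m. canon m n (A i)) = (\<Sum>i=1..m. int n - 2)"
    by (rule sum.cong) (auto simp: canon_def V_def)
  moreover have "(\<Sum>j=1..n. canon m n (B j)) = (\<Sum>j=1..n. int m - 2)"
    by (rule sum.cong) (auto simp: canon_def V_def)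
  ultimately show ?thesis unfolding degree_def sum_V by (simp add: algebra_simps)
qed

lemma degree_orient_div:
  assumes "inj_on p (V m n)"
  shows "degree m n (orient_div m n p) = (int m - 1) * (int n - 1) - 1"
proof -
  have "degree m n (orient_div m n p) + degree m n (orient_div m n (\<lambda>z. - p z)) = degree m n (canon m n)"
    unfolding degree_def by (simp add: sum.distrib[symmetric] orient_div_reverse[OF assms])
  moreover have "degree m n (orient_div m n p) = degree m n (orient_div m n (\<lambda>z. - p z))"
    using arg_cong[OF sum_card_descents_reverse[of m n p], of int]
    unfolding degree_def orient_div_def by (simp add: sum_subtractf)
  ultimately show ?thesis using degree_canon[of m n] by simp
qed


section \<open>Burning\<close>

text \<open>Dhar's burning algorithm: starting from a burnt set S containing the sink, a parking
  configuration lets the fire spread to all of V, one vertex at a time; p records the order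
  in which the vertices outside S catch fire.\<close>

definition burning_order :: "nat \<Rightarrow> nat \<Rightarrow> (vert \<Rightarrow> int) \<Rightarrow> vert set \<Rightarrow> (vert \<Rightarrow> int) \<Rightarrow> bool" where
  "burning_order m n w S p \<longleftrightarrow> inj_on p (V m n - S) \<and> (\<forall>x\<in>V m n - S. 0 \<le> p x) \<and>
     (\<forall>x\<in>V m n - S. w x < int (card {y \<in> nbrs m n x. y \<in> S \<or> p y < p x}))"

lemma burning_order_insert:
  assumes x: "x \<in> V m n - S" "w x < int (card {y \<in> nbrs m n x. y \<in> S})"
    and p: "burning_order m n w (insert x S) p"
  shows "burning_order m n w S (\<lambda>z. if z = x then 0 else p z + 1)"
proof -
  define p' where "p' = (\<lambda>z. if z = x then 0 else p z + 1)"
  have VS: "V m n - S - {x} = V m n - insert x S" by blast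
  have "inj_on (\<lambda>z. p z + 1) (V m n - S - {x})"
    using p unfolding burning_order_def VS inj_on_def by simp
  moreover have "0 < p z + 1" if "z \<in> V m n - S - {x}" for z
    using p that unfolding burning_order_def VS by fastforce
  ultimately have "inj_on p' (V m n - S)" unfolding p'_def by (rule inj_on_extend_below)
  moreover have "\<forall>z\<in>V m n - S. 0 \<le> p' z" using p unfolding burning_order_def p'_def by auto
  moreover have "w z < int (card {y \<in> nbrs m n z. y \<in> S \<or> p' y < p' z})" if z: "z \<in> V m n - S" for z
  proof (cases "z = x")
    case True
    have "card {y \<in> nbrs m n x. y \<in> S} \<le> card {y \<in> nbrs m n z. y \<in> S \<or> p' y < p' z}"
      using True by (intro card_mono) auto
    then show ?thesis using x(2) True by simp
  next
    case False
    then have zS: "z \<in> V m n - insert x S" using z by blast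
    then have "w z < int (card {y \<in> nbrs m n z. y \<in> insert x S \<or> p y < p z})"
      using p unfolding burning_order_def by blast
    also have "{y \<in> nbrs m n z. y \<in> insert x S \<or> p y < p z} = {y \<in> nbrs m n z. y \<in> S \<or> p' y < p' z}"
      using p zS False unfolding burning_order_def p'_def by auto
    finally show ?thesis .
  qed
  ultimately show ?thesis unfolding burning_order_def p'_def by blast
qed

lemma exists_burning_order:
  assumes pw: "parking m n w" and "sink m \<in> S" "S \<subseteq> V m n"
  shows "\<exists>p. burning_order m n w S p"
  using assms(2,3)
proof (induction "card (V m n - S)" arbitrary: S rule: less_induct)
  case (less S)
  show ?case
  proof (cases "V m n - S = {}")
    case True
    show ?thesis unfolding burning_order_def True by simp
  next
    case False
    have "V m n - S \<subseteq> V m n - {sink m}" using less.prems by blast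
    then obtain x where x: "x \<in> V m n - S" "w x < int (card {y \<in> nbrs m n x. y \<notin> V m n - S})"
      using parking_burning_vertex[OF pw False] by blast
    have "{y \<in> nbrs m n x. y \<notin> V m n - S} = {y \<in> nbrs m n x. y \<in> S}"
      using nbrs_subset_V[of m n x] by blast
    with x(2) have wx: "w x < int (card {y \<in> nbrs m n x. y \<in> S})" by simp
    have "card (V m n - insert x S) < card (V m n - S)"
      using x(1) by (intro psubset_card_mono) auto
    moreover have "sink m \<in> insert x S" "insert x S \<subseteq> V m n" using less.prems x(1) by auto
    ultimately obtain p where "burning_order m n w (insert x S) p" using less.hyps by blast
    \<comment> \<open>x burns first among the vertices outside S\<close>
    then show ?thesis using burning_order_insert[of x m n S w] x(1) wx by blast
  qed
qed

lemma parking_below_orient_div: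
  assumes m: "1 \<le> m" and pw: "parking m n w" and neg: "w (sink m) < 0"
  shows "\<exists>q. inj_on q (V m n) \<and> (\<forall>x\<in>V m n. w x \<le> orient_div m n q x)"
proof -
  obtain p where "burning_order m n w {sink m} p"
    using exists_burning_order[OF pw] sink_in_V[OF m] by blast
  then have p: "inj_on p (V m n - {sink m})" "\<forall>x\<in>V m n - {sink m}. 0 \<le> p x"
    "\<forall>x\<in>V m n - {sink m}. w x < int (card {y \<in> nbrs m n x. y \<in> {sink m} \<or> p y < p x})"
    unfolding burning_order_def by auto
  define q where "q = (\<lambda>z. if z = sink m then -1 else p z)"
  have q_sink: "q (sink m) < q z" if "z \<in> V m n - {sink m}" for z
  proof -
    have "z \<noteq> sink m" "0 \<le> p z" using that p(2) by auto
    then show ?thesis unfolding q_def by simp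
  qed
  have "inj_on q (V m n)"
    unfolding q_def
  proof (rule inj_on_extend_below[OF p(1)])
    fix z assume "z \<in> V m n - {sink m}"
    then have "0 \<le> p z" using p(2) by blast
    then show "- 1 < p z" by simp
  qed
  moreover have "w x \<le> orient_div m n q x" if x: "x \<in> V m n" for x
  proof (cases "x = sink m")
    case True
    have "{y \<in> nbrs m n x. q y < q x} = {}"
      using True q_sink nbrs_subset_V adj_irrefl unfolding nbrs_def by fastforce
    then show ?thesis using x neg True unfolding orient_div_def by simp
  next
    case False
    have "0 \<le> p x" using p(2) x False by blast
    then have "q y < q x \<longleftrightarrow> y \<in> {sink m} \<or> p y < p x" for y
      using False unfolding q_def by auto
    then have "{y \<in> nbrs m n x. q y < q x} = {y \<in> nbrs m n x. y \<in> {sink m} \<or> p y < p x}"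
      by blast
    then show ?thesis using p(3) x False unfolding orient_div_def by simp
  qed
  ultimately show ?thesis by blast
qed

lemma not_effective_below_orient_div:
  assumes m: "1 \<le> m" and n: "1 \<le> n" and cD: "config m n D" and ne: "\<not> effective m n D"
  shows "\<exists>q D'. inj_on q (V m n) \<and> config m n D' \<and> toppling_equiv m n D D' \<and>
    (\<forall>x\<in>V m n. D' x \<le> orient_div m n q x)"
proof -
  obtain w where w: "config m n w" "parking m n w" "toppling_equiv m n D w"
    using parking_exists[OF m n cD] by blast
  have "w (sink m) < 0"
  proof (rule ccontr)
    assume "\<not> w (sink m) < 0"
    then have "\<forall>c. 0 \<le> w c"
      using w(1) parking_nonneg[OF w(2)] unfolding config_def by (metis Diff_iff not_less singletonD order_refl)
    then show False using ne w unfolding effective_def by blast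
  qed
  then show ?thesis using parking_below_orient_div[OF m w(2)] w by blast
qed


section \<open>Riemann--Roch\<close>

text \<open>Baker--Norine: a configuration is not effective iff it is equivalent to one lying below
  some orient_div q, so rank D + 1 is the least excess of a configuration equivalent to D over
  an orientation divisor.\<close>

definition oriented_reps :: "nat \<Rightarrow> nat \<Rightarrow> (vert \<Rightarrow> int) \<Rightarrow> ((vert \<Rightarrow> int) \<times> (vert \<Rightarrow> int)) set" where
  "oriented_reps m n D = {(D', q). config m n D' \<and> toppling_equiv m n D D' \<and> inj_on q (V m n)}"

definition excess :: "nat \<Rightarrow> nat \<Rightarrow> (vert \<Rightarrow> int) \<Rightarrow> (vert \<Rightarrow> int) \<Rightarrow> nat" where
  "excess m n D' q = (\<Sum>x\<in>V m n. nat (D' x - orient_div m n q x))"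

definition deficit :: "nat \<Rightarrow> nat \<Rightarrow> (vert \<Rightarrow> int) \<Rightarrow> (vert \<Rightarrow> int) \<Rightarrow> nat" where
  "deficit m n D' q = (\<Sum>x\<in>V m n. nat (orient_div m n q x - D' x))"

lemma oriented_reps_nonempty:
  assumes "config m n D"
  shows "(D, \<lambda>x. case x of A i \<Rightarrow> - int i - 1 | B j \<Rightarrow> int j) \<in> oriented_reps m n D"
proof -
  have "inj_on (\<lambda>x. case x of A i \<Rightarrow> - int i - 1 | B j \<Rightarrow> int j) (V m n)"
    by (rule inj_onI) (auto split: vert.splits)
  then show ?thesis using assms toppling_equiv_refl unfolding oriented_reps_def by simp
qed

lemma breaking_of_oriented_rep:
  assumes m: "1 \<le> m" and r: "(D', q) \<in> oriented_reps m n D"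
  shows "\<exists>f. breaking m n D f \<and> degree m n f = int (excess m n D' q)"
proof -
  have cD': "config m n D'" and te: "toppling_equiv m n D D'" and inj: "inj_on q (V m n)"
    using r unfolding oriented_reps_def by auto
  define f where "f = (\<lambda>x. if x \<in> V m n then int (nat (D' x - orient_div m n q x)) else 0)"
  \<comment> \<open>D' - f lies below orient_div q; the gap g would make orient_div q effective\<close>
  define g where "g = (\<lambda>x. orient_div m n q x - (D' x - f x))"
  have g: "config m n g" "\<forall>c. 0 \<le> g c"
    using cD' unfolding g_def f_def config_def orient_div_def by auto
  have "\<not> effective m n (\<lambda>x. D x - f x)"
  proof
    assume "effective m n (\<lambda>x. D x - f x)"
    then have "effective m n (\<lambda>x. D' x - f x)"
      using effective_toppling_equiv toppling_equiv_diff[OF te] by blast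
    from effective_add_nonneg[OF this g] show False
      using orient_div_not_effective[OF m inj] unfolding g_def by simp
  qed
  moreover have "config m n f" "\<forall>c. 0 \<le> f c" unfolding f_def config_def by simp_all
  moreover have "degree m n f = int (excess m n D' q)"
    unfolding degree_def excess_def f_def by simp
  ultimately show ?thesis unfolding breaking_def by blast
qed

lemma oriented_rep_of_breaking:
  assumes m: "1 \<le> m" and n: "1 \<le> n" and cD: "config m n D" and f: "breaking m n D f"
  shows "\<exists>(D', q)\<in>oriented_reps m n D. int (excess m n D' q) \<le> degree m n f"
proof -
  have cf: "config m n f" and f0: "\<forall>c. 0 \<le> f c" and ne: "\<not> effective m n (\<lambda>x. D x - f x)"
    using f unfolding breaking_def by auto
  obtain q D'' where q: "inj_on q (V m n)" "config m n D''" "toppling_equiv m n (\<lambda>x. D x - f x) D''"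
      "\<forall>x\<in>V m n. D'' x \<le> orient_div m n q x"
    using not_effective_below_orient_div[OF m n config_diff[OF cD cf] ne] by blast
  define D' where "D' = (\<lambda>x. D'' x + f x)"
  have "(D', q) \<in> oriented_reps m n D"
    using q cf unfolding oriented_reps_def D'_def toppling_equiv_def config_def
    by (simp add: algebra_simps)
  moreover have "int (excess m n D' q) \<le> (\<Sum>x\<in>V m n. f x)"
    unfolding excess_def D'_def of_nat_sum using q(4) f0 by (intro sum_mono) auto
  ultimately show ?thesis unfolding degree_def by blast
qed

lemma rank_eq_Least_excess:
  assumes m: "1 \<le> m" and n: "1 \<le> n" and cD: "config m n D"
  shows "rank m n D + 1 = int (LEAST k. \<exists>(D', q)\<in>oriented_reps m n D. excess m n D' q = k)"
proof -
  define R where "R = (LEAST k. \<exists>f. breaking m n D f \<and> degree m n f = int k)"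
  define H where "H = (LEAST k. \<exists>(D', q)\<in>oriented_reps m n D. excess m n D' q = k)"
  have "\<exists>(D', q)\<in>oriented_reps m n D. excess m n D' q = H"
    unfolding H_def by (rule LeastI_ex) (use oriented_reps_nonempty[OF cD] in blast)
  then obtain D' q where r: "(D', q) \<in> oriented_reps m n D" "excess m n D' q = H" by blast
  then have "\<exists>f. breaking m n D f \<and> degree m n f = int H"
    using breaking_of_oriented_rep[OF m] by blast
  then have RH: "R \<le> H" and "\<exists>f. breaking m n D f \<and> degree m n f = int R"
    unfolding R_def by (auto intro: Least_le LeastI)
  then obtain f where f: "breaking m n D f" "degree m n f = int R" by blast
  obtain D'' q' where "(D'', q') \<in> oriented_reps m n D" "excess m n D'' q' \<le> R"
    using oriented_rep_of_breaking[OF m n cD f(1)] f(2) by auto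
  then have "H \<le> R" unfolding H_def by (metis (mono_tags, lifting) Least_le case_prod_conv le_trans)
  then show ?thesis using RH unfolding rank_eq_Least_breaking R_def[symmetric] H_def[symmetric] by simp
qed

lemma oriented_reps_reflect:
  "(D', q) \<in> oriented_reps m n D \<Longrightarrow>
    (\<lambda>x. canon m n x - D' x, \<lambda>x. - q x) \<in> oriented_reps m n (\<lambda>x. canon m n x - D x)"
  unfolding oriented_reps_def
  by (auto simp: config_diff[OF config_canon] toppling_equiv_reflect inj_on_def)

lemma excess_deficit_reflect:
  assumes "inj_on q (V m n)"
  shows "excess m n (\<lambda>x. canon m n x - D' x) (\<lambda>x. - q x) = deficit m n D' q"
    and "deficit m n (\<lambda>x. canon m n x - D' x) (\<lambda>x. - q x) = excess m n D' q"
  unfolding excess_def deficit_def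
  by (auto intro!: sum.cong simp: orient_div_reverse[OF assms, symmetric] algebra_simps)

lemma rank_reflect_eq_Least_deficit:
  assumes m: "1 \<le> m" and n: "1 \<le> n" and cD: "config m n D"
  shows "rank m n (\<lambda>x. canon m n x - D x) + 1 =
    int (LEAST k. \<exists>(D', q)\<in>oriented_reps m n D. deficit m n D' q = k)"
proof -
  have "(\<exists>(D', q)\<in>oriented_reps m n (\<lambda>x. canon m n x - D x). excess m n D' q = k) \<longleftrightarrow>
      (\<exists>(D', q)\<in>oriented_reps m n D. deficit m n D' q = k)" for k
  proof
    assume "\<exists>(D', q)\<in>oriented_reps m n (\<lambda>x. canon m n x - D x). excess m n D' q = k"
    then obtain D' q where r: "(D', q) \<in> oriented_reps m n (\<lambda>x. canon m n x - D x)"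
      "excess m n D' q = k" by blast
    then have "inj_on q (V m n)" unfolding oriented_reps_def by simp
    then show "\<exists>(D', q)\<in>oriented_reps m n D. deficit m n D' q = k"
      using oriented_reps_reflect[OF r(1)] excess_deficit_reflect(2) r(2) by fastforce
  next
    assume "\<exists>(D', q)\<in>oriented_reps m n D. deficit m n D' q = k"
    then obtain D' q where r: "(D', q) \<in> oriented_reps m n D" "deficit m n D' q = k" by blast
    then have "inj_on q (V m n)" unfolding oriented_reps_def by simp
    then show "\<exists>(D', q)\<in>oriented_reps m n (\<lambda>x. canon m n x - D x). excess m n D' q = k"
      using oriented_reps_reflect[OF r(1)] excess_deficit_reflect(1) r(2) by blast
  qed
  then show ?thesis
    using rank_eq_Least_excess[OF m n config_diff[OF config_canon cD]] by simp
qed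

theorem riemann_roch:
  assumes m: "1 \<le> m" and n: "1 \<le> n" and cD: "config m n D"
  shows "rank m n D - rank m n (\<lambda>x. canon m n x - D x) =
    degree m n D - ((int m - 1) * (int n - 1) - 1)"
proof -
  define c where "c = degree m n D - ((int m - 1) * (int n - 1) - 1)"
  have "int (excess m n D' q) = int (deficit m n D' q) + c" if "(D', q) \<in> oriented_reps m n D" for D' q
  proof -
    have te: "toppling_equiv m n D D'" and inj: "inj_on q (V m n)"
      using that unfolding oriented_reps_def by auto
    have "int (excess m n D' q) - int (deficit m n D' q) = (\<Sum>x\<in>V m n. D' x - orient_div m n q x)"
      unfolding excess_def deficit_def of_nat_sum sum_subtractf[symmetric] by (rule sum.cong) auto
    also have "\<dots> = c"
      unfolding sum_subtractf c_def
      using degree_toppling_equiv[OF te] degree_orient_div[OF inj] unfolding degree_def by simp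
    finally show ?thesis by simp
  qed
  then have "int (LEAST k. \<exists>(D', q)\<in>oriented_reps m n D. excess m n D' q = k) =
      int (LEAST k. \<exists>(D', q)\<in>oriented_reps m n D. deficit m n D' q = k) + c"
    using Least_shift[OF oriented_reps_nonempty[OF cD], of "case_prod (excess m n)"
        "case_prod (deficit m n)" c] by (simp add: case_prod_beta')
  then show ?thesis
    using rank_eq_Least_excess[OF m n cD] rank_reflect_eq_Least_deficit[OF m n cD]
    unfolding c_def by linarith
qed


section \<open>Relabelling symmetry\<close>

definition sink_automorphism :: "nat \<Rightarrow> nat \<Rightarrow> (vert \<Rightarrow> vert) \<Rightarrow> bool" where
  "sink_automorphism m n \<sigma> \<longleftrightarrow> bij \<sigma> \<and> (\<forall>x. \<sigma> x \<in> V m n \<longleftrightarrow> x \<in> V m n) \<and>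
     (\<forall>x y. adj m n (\<sigma> x) (\<sigma> y) = adj m n x y) \<and> (\<forall>x. gdeg m n (\<sigma> x) = gdeg m n x) \<and>
     \<sigma> (sink m) = sink m"

context
  fixes m n :: nat and \<sigma> :: "vert \<Rightarrow> vert"
  assumes \<sigma>: "sink_automorphism m n \<sigma>"
begin

lemma automorphism_V: "\<sigma> x \<in> V m n \<longleftrightarrow> x \<in> V m n"
  using \<sigma> unfolding sink_automorphism_def by blast

lemma automorphism_inj: "inj \<sigma>"
  using \<sigma> unfolding sink_automorphism_def by (simp add: bij_is_inj)

lemma automorphism_sink: "\<sigma> (sink m) = sink m"
  using \<sigma> unfolding sink_automorphism_def by blast

lemma automorphism_adj: "adj m n (\<sigma> x) (\<sigma> y) = adj m n x y"
  using \<sigma> unfolding sink_automorphism_def by blast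

lemma automorphism_gdeg: "gdeg m n (\<sigma> x) = gdeg m n x"
  using \<sigma> unfolding sink_automorphism_def by blast

lemma automorphism_inverse: "\<sigma> (inv \<sigma> x) = x" "inv \<sigma> (\<sigma> x) = x"
  using \<sigma> unfolding sink_automorphism_def by (auto simp: surj_f_inv_f bij_is_surj inv_f_f bij_is_inj)

lemma sink_automorphism_inv: "sink_automorphism m n (inv \<sigma>)"
proof -
  have "bij (inv \<sigma>)" using \<sigma> unfolding sink_automorphism_def by (simp add: bij_imp_bij_inv)
  moreover have "inv \<sigma> x \<in> V m n \<longleftrightarrow> x \<in> V m n" for x
    by (metis automorphism_V automorphism_inverse(1))
  moreover have "adj m n (inv \<sigma> x) (inv \<sigma> y) = adj m n x y" for x y
    by (metis automorphism_adj automorphism_inverse(1))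
  moreover have "gdeg m n (inv \<sigma> x) = gdeg m n x" for x
    by (metis automorphism_gdeg automorphism_inverse(1))
  moreover have "inv \<sigma> (sink m) = sink m" by (metis automorphism_sink automorphism_inverse(2))
  ultimately show ?thesis unfolding sink_automorphism_def by blast
qed

lemma comp_automorphism_inv: "(u \<circ> \<sigma>) \<circ> inv \<sigma> = u"
  by (auto simp: automorphism_inverse)

lemma bij_betw_automorphism: "bij_betw \<sigma> (V m n) (V m n)"
  by (rule bij_betw_byWitness[where f' = "inv \<sigma>"])
    (auto simp: automorphism_inverse automorphism_V, metis automorphism_V automorphism_inverse(1))

lemma Delta_automorphism: "Delta m n (\<sigma> c) (\<sigma> x) = Delta m n c x"
  using automorphism_inj unfolding Delta_def by (simp add: inj_eq automorphism_adj automorphism_gdeg)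

lemma config_automorphism: "config m n u \<Longrightarrow> config m n (u \<circ> \<sigma>)"
  unfolding config_def by (simp add: automorphism_V)

lemma degree_automorphism: "degree m n (u \<circ> \<sigma>) = degree m n u"
  unfolding degree_def o_def by (rule sum.reindex_bij_betw[OF bij_betw_automorphism])

lemma laplacian_automorphism: "laplacian m n t (\<sigma> x) = laplacian m n (t \<circ> \<sigma>) x"
  unfolding laplacian_def o_def Delta_automorphism[symmetric, of _ x]
  by (rule sum.reindex_bij_betw[OF bij_betw_automorphism, symmetric])

lemma toppling_equiv_automorphism:
  "toppling_equiv m n u v \<Longrightarrow> toppling_equiv m n (u \<circ> \<sigma>) (v \<circ> \<sigma>)"
  unfolding toppling_equiv_iff by (metis comp_apply laplacian_automorphism)

lemma effective_automorphism: "effective m n u \<Longrightarrow> effective m n (u \<circ> \<sigma>)"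
  unfolding effective_def by (metis comp_apply config_automorphism toppling_equiv_automorphism)

lemma nbrs_automorphism: "nbrs m n (\<sigma> x) = \<sigma> ` nbrs m n x"
proof
  show "\<sigma> ` nbrs m n x \<subseteq> nbrs m n (\<sigma> x)"
    unfolding nbrs_def by (auto simp: automorphism_V automorphism_adj)
  show "nbrs m n (\<sigma> x) \<subseteq> \<sigma> ` nbrs m n x"
  proof
    fix y assume y: "y \<in> nbrs m n (\<sigma> x)"
    have "inv \<sigma> y \<in> nbrs m n x"
      using y automorphism_V[of "inv \<sigma> y"] automorphism_adj[of x "inv \<sigma> y"]
      unfolding nbrs_def by (simp add: automorphism_inverse)
    then show "y \<in> \<sigma> ` nbrs m n x" by (rule rev_image_eqI) (simp add: automorphism_inverse)
  qed
qed

lemma parking_automorphism: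
  assumes pu: "parking m n u"
  shows "parking m n (u \<circ> \<sigma>)"
proof -
  have "\<sigma> x = sink m \<longleftrightarrow> x = sink m" for x
    using automorphism_sink automorphism_inj by (metis injD)
  then have non_sink: "\<sigma> x \<in> V m n - {sink m} \<longleftrightarrow> x \<in> V m n - {sink m}" for x
    by (simp add: automorphism_V)
  have "\<exists>x\<in>C. (u \<circ> \<sigma>) x < int (card {y \<in> nbrs m n x. y \<notin> C})"
    if C: "C \<noteq> {}" "C \<subseteq> V m n - {sink m}" for C
  proof -
    have "\<sigma> ` C \<noteq> {}" "\<sigma> ` C \<subseteq> V m n - {sink m}" using C non_sink by auto
    then obtain y where "y \<in> \<sigma> ` C" "u y < int (card {z \<in> nbrs m n y. z \<notin> \<sigma> ` C})"
      by (rule parking_burning_vertex[OF pu])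
    then obtain x where x: "x \<in> C" "u (\<sigma> x) < int (card {z \<in> nbrs m n (\<sigma> x). z \<notin> \<sigma> ` C})"
      by blast
    have "{z \<in> nbrs m n (\<sigma> x). z \<notin> \<sigma> ` C} = \<sigma> ` {z \<in> nbrs m n x. z \<notin> C}"
      unfolding nbrs_automorphism using automorphism_inj by (auto simp: inj_eq)
    also have "card \<dots> = card {z \<in> nbrs m n x. z \<notin> C}"
      using automorphism_inj by (simp add: card_image inj_on_subset)
    finally show ?thesis using x by auto
  qed
  then show ?thesis using pu non_sink unfolding parking_iff by simp
qed

lemma canon_automorphism: "canon m n \<circ> \<sigma> = canon m n"
  by (rule ext) (simp add: canon_def automorphism_V automorphism_gdeg)

end

lemma effective_automorphism_iff:
  assumes \<sigma>: "sink_automorphism m n \<sigma>"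
  shows "effective m n (u \<circ> \<sigma>) \<longleftrightarrow> effective m n u"
  using effective_automorphism[OF \<sigma>] effective_automorphism[OF sink_automorphism_inv[OF \<sigma>]]
    comp_automorphism_inv[OF \<sigma>] by metis

lemma breaking_automorphism:
  assumes \<sigma>: "sink_automorphism m n \<sigma>"
  shows "breaking m n u f \<Longrightarrow> breaking m n (u \<circ> \<sigma>) (f \<circ> \<sigma>)"
  unfolding breaking_def
  using config_automorphism[OF \<sigma>] effective_automorphism_iff[OF \<sigma>, of "\<lambda>x. u x - f x"]
  by (auto simp: o_def)

lemma rank_automorphism:
  assumes \<sigma>: "sink_automorphism m n \<sigma>"
  shows "rank m n (u \<circ> \<sigma>) = rank m n u"
proof (rule rank_cong)
  fix f assume "breaking m n (u \<circ> \<sigma>) f"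
  then have "breaking m n u (f \<circ> inv \<sigma>)"
    using breaking_automorphism[OF sink_automorphism_inv[OF \<sigma>]] comp_automorphism_inv[OF \<sigma>] by metis
  then show "\<exists>f'. breaking m n u f' \<and> degree m n f' = degree m n f"
    using degree_automorphism[OF sink_automorphism_inv[OF \<sigma>]] by blast
next
  fix f assume "breaking m n u f"
  then show "\<exists>f'. breaking m n (u \<circ> \<sigma>) f' \<and> degree m n f' = degree m n f"
    using breaking_automorphism[OF \<sigma>] degree_automorphism[OF \<sigma>] by blast
qed

text \<open>The sink A m stays fixed; sorted_conf likewise only constrains A 1, ..., A (m - 1).\<close>

definition relabel :: "(nat \<Rightarrow> nat) \<Rightarrow> (nat \<Rightarrow> nat) \<Rightarrow> vert \<Rightarrow> vert" where
  "relabel \<alpha> \<beta> x = (case x of A i \<Rightarrow> A (\<alpha> i) | B j \<Rightarrow> B (\<beta> j))"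

definition relabel_perms :: "nat \<Rightarrow> nat \<Rightarrow> (nat \<Rightarrow> nat) \<Rightarrow> (nat \<Rightarrow> nat) \<Rightarrow> bool" where
  "relabel_perms m n \<alpha> \<beta> \<longleftrightarrow> \<alpha> permutes {1..m - 1} \<and> \<beta> permutes {1..n}"

lemma relabel_simps [simp]: "relabel \<alpha> \<beta> (A i) = A (\<alpha> i)" "relabel \<alpha> \<beta> (B j) = B (\<beta> j)"
  by (simp_all add: relabel_def)

lemma relabel_comp: "relabel \<alpha> \<beta> \<circ> relabel \<alpha>' \<beta>' = relabel (\<alpha> \<circ> \<alpha>') (\<beta> \<circ> \<beta>')"
  by (rule ext) (simp add: relabel_def split: vert.splits)

lemma relabel_perms_comp:
  "relabel_perms m n \<alpha> \<beta> \<Longrightarrow> relabel_perms m n \<alpha>' \<beta>' \<Longrightarrow> relabel_perms m n (\<alpha> \<circ> \<alpha>') (\<beta> \<circ> \<beta>')"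
  unfolding relabel_perms_def using permutes_compose by blast

lemma permutes_in_range:
  fixes \<alpha> :: "nat \<Rightarrow> nat"
  assumes "\<alpha> permutes {1..k}" "k \<le> K"
  shows "1 \<le> \<alpha> i \<and> \<alpha> i \<le> K \<longleftrightarrow> 1 \<le> i \<and> i \<le> K"
proof (cases "i \<in> {1..k}")
  case True
  then have "\<alpha> i \<in> {1..k}" using permutes_in_image[OF assms(1)] by blast
  then show ?thesis using True assms(2) by auto
next
  case False
  then show ?thesis using permutes_not_in[OF assms(1)] by simp
qed

lemma sink_automorphism_relabel:
  assumes "relabel_perms m n \<alpha> \<beta>"
  shows "sink_automorphism m n (relabel \<alpha> \<beta>)"
proof -
  have a: "\<alpha> permutes {1..m - 1}" and b: "\<beta> permutes {1..n}"
    using assms unfolding relabel_perms_def by auto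
  have "bij (relabel \<alpha> \<beta>)"
  proof (rule bij_betw_byWitness[where f' = "relabel (inv \<alpha>) (inv \<beta>)"])
    show "\<forall>x\<in>UNIV. relabel (inv \<alpha>) (inv \<beta>) (relabel \<alpha> \<beta> x) = x"
      "\<forall>x\<in>UNIV. relabel \<alpha> \<beta> (relabel (inv \<alpha>) (inv \<beta>) x) = x"
      using a b by (auto simp: relabel_def permutes_inverses split: vert.splits)
  qed auto
  moreover have "relabel \<alpha> \<beta> x \<in> V m n \<longleftrightarrow> x \<in> V m n" for x
    using permutes_in_range[OF a, of m] permutes_in_range[OF b, of n] by (cases x) (auto simp: V_def)
  moreover have "adj m n (relabel \<alpha> \<beta> x) (relabel \<alpha> \<beta> y) = adj m n x y" for x y
    using permutes_in_range[OF a, of m] permutes_in_range[OF b, of n] by (cases x; cases y) auto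
  moreover have "gdeg m n (relabel \<alpha> \<beta> x) = gdeg m n x" for x
    by (cases x) auto
  moreover have "relabel \<alpha> \<beta> (sink m) = sink m"
  proof -
    have "m \<notin> {1..m - 1}" by auto
    then show ?thesis using permutes_not_in[OF a] by (simp add: sink_def)
  qed
  ultimately show ?thesis unfolding sink_automorphism_def by blast
qed

lemma exists_permutes_sorted:
  fixes f :: "nat \<Rightarrow> int"
  shows "\<exists>\<alpha>. \<alpha> permutes {1..k} \<and> (\<forall>i j. 1 \<le> i \<longrightarrow> i \<le> j \<longrightarrow> j \<le> k \<longrightarrow> f (\<alpha> i) \<le> f (\<alpha> j))"
proof (induction k arbitrary: f)
  case 0
  show ?case by (intro exI[of _ id]) (simp add: id_def)
next
  case (Suc k)
  define S where "S = {1..Suc k}"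
  obtain j0 where j0: "j0 \<in> S" "\<forall>i\<in>S. f i \<le> f j0"
    using finite_ex_max[of S f] unfolding S_def by auto
  \<comment> \<open>move a maximal value to the last position and sort the rest\<close>
  define \<tau> where "\<tau> = Transposition.transpose j0 (Suc k)"
  have \<tau>: "\<tau> permutes S" unfolding \<tau>_def S_def by (rule permutes_swap_id) (use j0(1) S_def in auto)
  obtain \<alpha> where \<alpha>: "\<alpha> permutes {1..k}"
    "\<forall>i j. 1 \<le> i \<longrightarrow> i \<le> j \<longrightarrow> j \<le> k \<longrightarrow> f (\<tau> (\<alpha> i)) \<le> f (\<tau> (\<alpha> j))"
    using Suc.IH[of "f \<circ> \<tau>"] by auto
  have \<alpha>S: "\<alpha> permutes S" by (rule permutes_subset[OF \<alpha>(1)]) (auto simp: S_def)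
  have "(\<tau> \<circ> \<alpha>) permutes S" by (rule permutes_compose[OF \<alpha>S \<tau>])
  moreover have "f ((\<tau> \<circ> \<alpha>) i) \<le> f ((\<tau> \<circ> \<alpha>) j)" if "1 \<le> i" "i \<le> j" "j \<le> Suc k" for i j
  proof (cases "j = Suc k")
    case True
    have "\<tau> (\<alpha> i) \<in> S"
      using that permutes_in_image[OF \<alpha>S] permutes_in_image[OF \<tau>] unfolding S_def by simp
    moreover have "\<tau> (\<alpha> j) = j0"
      using True permutes_not_in[OF \<alpha>(1), of "Suc k"] unfolding \<tau>_def by simp
    ultimately show ?thesis using j0(2) by simp
  next
    case False
    then show ?thesis using \<alpha>(2) that by simp
  qed
  ultimately show ?case unfolding S_def by blast
qed

lemma permutes_sorted_eq:
  fixes f :: "nat \<Rightarrow> int"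
  assumes \<alpha>: "\<alpha> permutes {1..k}"
    and sorted: "\<forall>i j. 1 \<le> i \<longrightarrow> i \<le> j \<longrightarrow> j \<le> k \<longrightarrow> f i \<le> f j"
    and sorted_\<alpha>: "\<forall>i j. 1 \<le> i \<longrightarrow> i \<le> j \<longrightarrow> j \<le> k \<longrightarrow> f (\<alpha> i) \<le> f (\<alpha> j)"
  shows "f (\<alpha> i) = f i"
proof (cases "i \<in> {1..k}")
  case False
  then show ?thesis using permutes_not_in[OF \<alpha>] by simp
next
  case True
  define L where "L = [1..<k+1]"
  have len: "length L = k" and nth_L: "\<And>i. i < k \<Longrightarrow> L ! i = i + 1"
    unfolding L_def by (simp_all del: upt_Suc add: nth_upt)
  have "sorted (map f L)" "sorted (map (f \<circ> \<alpha>) L)"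
    unfolding sorted_iff_nth_mono using sorted sorted_\<alpha> len nth_L by auto
  moreover have "mset (map (f \<circ> \<alpha>) L) = mset (map f L)"
  proof -
    have "image_mset \<alpha> (mset L) = mset L"
      unfolding L_def mset_upt using permutes_image_mset[OF \<alpha>] by (simp add: atLeastLessThanSuc_atLeastAtMost)
    then show ?thesis by (simp flip: image_mset.compositionality)
  qed
  ultimately have "sort (map f L) = map (f \<circ> \<alpha>) L" "sort (map f L) = map f L"
    by (auto intro: properties_for_sort sorted_sort_id)
  then have "map f L = map (f \<circ> \<alpha>) L" by (simp only:)
  then have "map f L ! (i - 1) = map (f \<circ> \<alpha>) L ! (i - 1)" by (rule arg_cong)
  then show ?thesis using True len nth_L[of "i - 1"] by auto
qed

lemma exists_relabel_sorted: "\<exists>\<alpha> \<beta>. relabel_perms m n \<alpha> \<beta> \<and> sorted_conf m n (u \<circ> relabel \<alpha> \<beta>)"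
proof -
  obtain \<alpha> where a: "\<alpha> permutes {1..m - 1}"
    "\<forall>i j. 1 \<le> i \<longrightarrow> i \<le> j \<longrightarrow> j \<le> m - 1 \<longrightarrow> u (A (\<alpha> i)) \<le> u (A (\<alpha> j))"
    using exists_permutes_sorted[where f = "\<lambda>i. u (A i)" and k = "m - 1"] by blast
  obtain \<beta> where b: "\<beta> permutes {1..n}"
    "\<forall>i j. 1 \<le> i \<longrightarrow> i \<le> j \<longrightarrow> j \<le> n \<longrightarrow> u (B (\<beta> i)) \<le> u (B (\<beta> j))"
    using exists_permutes_sorted[where f = "\<lambda>j. u (B j)" and k = n] by blast
  show ?thesis
    using a b unfolding relabel_perms_def sorted_conf_def by auto
qed

lemma sorted_relabel_eq:
  assumes "relabel_perms m n \<alpha> \<beta>" "sorted_conf m n u" "sorted_conf m n (u \<circ> relabel \<alpha> \<beta>)"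
  shows "u \<circ> relabel \<alpha> \<beta> = u"
proof
  fix x
  have a: "\<alpha> permutes {1..m - 1}" and b: "\<beta> permutes {1..n}"
    using assms(1) unfolding relabel_perms_def by auto
  show "(u \<circ> relabel \<alpha> \<beta>) x = u x"
  proof (cases x)
    case (A i)
    then show ?thesis
      using permutes_sorted_eq[OF a, of "\<lambda>i. u (A i)" i] assms(2,3) unfolding sorted_conf_def by simp
  next
    case (B j)
    then show ?thesis
      using permutes_sorted_eq[OF b, of "\<lambda>j. u (B j)" j] assms(2,3) unfolding sorted_conf_def by simp
  qed
qed


section \<open>The duality on parking sorted configurations\<close>

lemma finite_PS:
  assumes m: "1 \<le> m"
  shows "finite (PS m n a b)"
proof -
  \<comment> \<open>the exponents fix the degree D0, and parking bounds every non-sink value by its degree\<close>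
  define D0 where "D0 = (int m - 1) * (int n - 1) + (b - 1) - a"
  define R where "R = \<bar>D0\<bar> + int (m + n) * int (card (V m n))"
  have "PS m n a b \<subseteq> {u. \<forall>x. (x \<in> V m n \<longrightarrow> u x \<in> {-R..R}) \<and> (x \<notin> V m n \<longrightarrow> u x = 0)}"
  proof safe
    fix u x assume u: "u \<in> PS m n a b"
    then have cu: "config m n u" and pu: "parking m n u" and deg: "degree m n u = D0"
      unfolding PS_def xpara_def ypara_def D0_def by auto
    have bound: "0 \<le> u c \<and> u c \<le> int (m + n)" if "c \<in> V m n - {sink m}" for c
      using parking_nonneg[OF pu that] parking_less_gdeg[OF pu that] by (cases c) auto
    then have "0 \<le> (\<Sum>c\<in>V m n - {sink m}. u c)" by (intro sum_nonneg) blast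
    moreover have "(\<Sum>c\<in>V m n - {sink m}. u c) \<le> (\<Sum>c\<in>V m n - {sink m}. int (m + n))"
      using bound by (intro sum_mono) blast
    moreover have "\<dots> \<le> int (m + n) * int (card (V m n))"
      using card_Diff1_le[of "V m n" "sink m"] by (simp add: mult.commute mult_left_mono)
    moreover have "u (sink m) = D0 - (\<Sum>c\<in>V m n - {sink m}. u c)"
      using degree_split[OF m, of n u] deg by simp
    moreover have "- \<bar>D0\<bar> \<le> D0" "D0 \<le> \<bar>D0\<bar>" by simp_all
    ultimately have sink: "u (sink m) \<in> {-R..R}" unfolding R_def by simp
    have "int (m + n) \<le> R" if "x \<in> V m n"
    proof -
      have "1 \<le> card (V m n)" using that by (auto simp: Suc_le_eq card_gt_0_iff)
      then have "int (m + n) * 1 \<le> int (m + n) * int (card (V m n))"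
        by (intro mult_left_mono) simp_all
      then show ?thesis unfolding R_def by simp
    qed
    then show "x \<in> V m n \<Longrightarrow> u x \<in> {-R..R}" using bound[of x] sink by (cases "x = sink m") auto
    show "x \<notin> V m n \<Longrightarrow> u x = 0" using cu unfolding config_def by blast
  qed
  then show ?thesis by (rule finite_subset) (intro finite_set_of_finite_funs; simp)
qed

definition reduced :: "nat \<Rightarrow> nat \<Rightarrow> (vert \<Rightarrow> int) \<Rightarrow> vert \<Rightarrow> int" where
  "reduced m n u = (SOME w. config m n w \<and> parking m n w \<and> toppling_equiv m n u w)"

definition sorted_rep :: "nat \<Rightarrow> nat \<Rightarrow> (vert \<Rightarrow> int) \<Rightarrow> vert \<Rightarrow> int" where
  "sorted_rep m n w =
    (SOME w'. \<exists>\<alpha> \<beta>. relabel_perms m n \<alpha> \<beta> \<and> w' = w \<circ> relabel \<alpha> \<beta> \<and> sorted_conf m n w')"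

definition dual :: "nat \<Rightarrow> nat \<Rightarrow> (vert \<Rightarrow> int) \<Rightarrow> vert \<Rightarrow> int" where
  "dual m n u = sorted_rep m n (reduced m n (\<lambda>x. canon m n x - u x))"

lemma dualE:
  assumes m: "1 \<le> m" and n: "1 \<le> n" and cu: "config m n u"
  obtains w \<alpha> \<beta> where "config m n w" "parking m n w" "toppling_equiv m n (\<lambda>x. canon m n x - u x) w"
    "relabel_perms m n \<alpha> \<beta>" "dual m n u = w \<circ> relabel \<alpha> \<beta>" "sorted_conf m n (dual m n u)"
proof -
  define w where "w = reduced m n (\<lambda>x. canon m n x - u x)"
  have w: "config m n w" "parking m n w" "toppling_equiv m n (\<lambda>x. canon m n x - u x) w"
    using someI_ex[OF parking_exists[OF m n config_diff[OF config_canon cu]]]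
    unfolding w_def reduced_def by auto
  have "\<exists>w'. \<exists>\<alpha> \<beta>. relabel_perms m n \<alpha> \<beta> \<and> w' = w \<circ> relabel \<alpha> \<beta> \<and> sorted_conf m n w'"
    using exists_relabel_sorted[of m n w] by blast
  from someI_ex[OF this] obtain \<alpha> \<beta> where "relabel_perms m n \<alpha> \<beta>"
    "dual m n u = w \<circ> relabel \<alpha> \<beta>" "sorted_conf m n (dual m n u)"
    unfolding dual_def w_def[symmetric] sorted_rep_def[symmetric] by blast
  with w that show ?thesis by blast
qed

lemma dual_mem_PS:
  assumes m: "1 \<le> m" and n: "1 \<le> n" and u: "u \<in> PS m n a b"
  shows "dual m n u \<in> PS m n b a"
proof -
  have cu: "config m n u" using u unfolding PS_def by blast
  obtain w \<alpha> \<beta> where w: "config m n w" "parking m n w" "toppling_equiv m n (\<lambda>x. canon m n x - u x) w"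
    and \<alpha>\<beta>: "relabel_perms m n \<alpha> \<beta>" and dual: "dual m n u = w \<circ> relabel \<alpha> \<beta>"
    and sorted: "sorted_conf m n (dual m n u)"
    by (rule dualE[OF m n cu])
  note \<sigma> = sink_automorphism_relabel[OF \<alpha>\<beta>]
  have "rank m n (dual m n u) = rank m n (\<lambda>x. canon m n x - u x)"
    unfolding dual rank_automorphism[OF \<sigma>] using rank_toppling_equiv[OF w(3)] by simp
  moreover have "degree m n (dual m n u) = degree m n (canon m n) - degree m n u"
    unfolding dual degree_automorphism[OF \<sigma>] degree_toppling_equiv[OF w(3), symmetric]
    unfolding degree_def by (rule sum_subtractf)
  moreover note riemann_roch[OF m n cu] degree_canon[of m n]
  moreover have "config m n (dual m n u)" "parking m n (dual m n u)"
    unfolding dual by (simp_all add: config_automorphism[OF \<sigma> w(1)] parking_automorphism[OF \<sigma> w(2)])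
  ultimately show ?thesis
    using u sorted unfolding PS_def xpara_def ypara_def by (simp add: algebra_simps)
qed

text \<open>Duality is an involution: a relabelling of u is the parking representative of
  canon - dual u, and u is the only sorted configuration in its relabelling orbit.\<close>

lemma dual_dual:
  assumes m: "1 \<le> m" and n: "1 \<le> n"
    and cu: "config m n u" and pu: "parking m n u" and su: "sorted_conf m n u"
  shows "dual m n (dual m n u) = u"
proof -
  obtain w \<alpha> \<beta> where w: "config m n w" "parking m n w" "toppling_equiv m n (\<lambda>x. canon m n x - u x) w"
    and \<alpha>\<beta>: "relabel_perms m n \<alpha> \<beta>" and dual: "dual m n u = w \<circ> relabel \<alpha> \<beta>"
    by (rule dualE[OF m n cu])
  note \<sigma> = sink_automorphism_relabel[OF \<alpha>\<beta>]
  have c_dual: "config m n (dual m n u)" unfolding dual by (rule config_automorphism[OF \<sigma> w(1)])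
  obtain z \<alpha>' \<beta>' where z: "config m n z" "parking m n z"
      "toppling_equiv m n (\<lambda>x. canon m n x - dual m n u x) z"
    and \<alpha>'\<beta>': "relabel_perms m n \<alpha>' \<beta>'" and dual2: "dual m n (dual m n u) = z \<circ> relabel \<alpha>' \<beta>'"
    and sorted2: "sorted_conf m n (dual m n (dual m n u))"
    by (rule dualE[OF m n c_dual])
  have "toppling_equiv m n u (\<lambda>x. canon m n x - w x)"
    using toppling_equiv_reflect[OF w(3), of "canon m n"] by simp
  then have "toppling_equiv m n (u \<circ> relabel \<alpha> \<beta>) ((\<lambda>x. canon m n x - w x) \<circ> relabel \<alpha> \<beta>)"
    by (rule toppling_equiv_automorphism[OF \<sigma>])
  moreover have "(\<lambda>x. canon m n x - w x) \<circ> relabel \<alpha> \<beta> = (\<lambda>x. canon m n x - dual m n u x)"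
    using canon_automorphism[OF \<sigma>] unfolding dual by (auto simp: fun_eq_iff)
  ultimately have "toppling_equiv m n (u \<circ> relabel \<alpha> \<beta>) z"
    using z(3) toppling_equiv_trans by simp
  then have "u \<circ> relabel \<alpha> \<beta> = z"
    using parking_unique[OF m parking_automorphism[OF \<sigma> pu] z(2) config_automorphism[OF \<sigma> cu] z(1)]
    by blast
  then have "dual m n (dual m n u) = u \<circ> relabel \<alpha> \<beta> \<circ> relabel \<alpha>' \<beta>'"
    unfolding dual2 by simp
  also have "\<dots> = u \<circ> relabel (\<alpha> \<circ> \<alpha>') (\<beta> \<circ> \<beta>')" by (simp add: comp_assoc relabel_comp)
  also have "\<dots> = u"
    using sorted_relabel_eq[OF relabel_perms_comp[OF \<alpha>\<beta> \<alpha>'\<beta>'] su] sorted2 calculation by simp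
  finally show ?thesis .
qed

theorem theorem14p1:
  fixes m n :: nat and a b :: int
  assumes "1 \<le> m" and "1 \<le> n"
  shows "finite (PS m n a b) \<and> Kcoeff m n a b = Kcoeff m n b a"
proof
  show "finite (PS m n a b)" by (rule finite_PS[OF assms(1)])
  have involution: "dual m n (dual m n u) = u" if "u \<in> PS m n c d" for u c d
    using that dual_dual[OF assms] unfolding PS_def by blast
  have "bij_betw (dual m n) (PS m n a b) (PS m n b a)"
    by (rule bij_betw_byWitness[where f' = "dual m n"])
      (use involution dual_mem_PS[OF assms] in blast)+
  then show "Kcoeff m n a b = Kcoeff m n b a" unfolding Kcoeff_def by (rule bij_betw_same_card)
qed

end
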